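(* Let $S_n:=Y_1+Y_2+\dots+Y_{n-1}$. Then, as $n\to\infty$, $S_n/\log(T_n)^\alpha$ converges in distribution to $\Lambda$.
   Context: Let $d\in\mathbb{N}$ and let $\Delta$ be a Borel random variable on $\mathbb{R}^d$. Assume there exist $\alpha>0$ and a random variable $\Lambda$ on $\mathbb{R}^d$ such that, for independent copies $(\Delta_i)$ of $\Delta$, $n^{-\alpha}\sum_{i=1}^n\Delta_i\to\Lambda$ in distribution. Let $T_n:=\lfloor e^{3n^{1/3}}\rfloor$. Let $(R_n)_{n\in\mathbb{N}}$ be independent Bernoulli random variables with parameters $(T_{n+1}-T_n)/T_{n+1}$, let $(\tilde\Delta_n)_{n\in\mathbb{N}}$ be independent copies of $\Delta$, independent of $(R_n)$, and set $Y_n:=R_n\tilde\Delta_n$. *)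

theory Defs
  imports "HOL-Probability.Probability"
begin

definition conv_in_distr :: "(nat \<Rightarrow> 'a::topological_space measure) \<Rightarrow> 'a measure \<Rightarrow> bool" where
  "conv_in_distr \<mu> \<nu> \<longleftrightarrow>
     (\<forall>f :: 'a \<Rightarrow> real. continuous_on UNIV f \<and> bounded (range f) \<longrightarrow>
        (\<lambda>n. integral\<^sup>L (\<mu> n) f) \<longlonglongrightarrow> integral\<^sup>L \<nu> f)"

definition T :: "nat \<Rightarrow> nat" where
  "T n = nat \<lfloor>exp (3 * real n powr (1/3))\<rfloor>"

end

theory Submission
  imports Defs "HOL-Real_Asymp.Real_Asymp"
begin

text \<open>The selectors \<open>R i\<close> are independent Bernoulli variables whose parameters sum to
  \<open>ln T n + o(ln T n)\<close>, so by Chebyshev's inequality the number \<open>N\<close> of selected indices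
  below \<open>n\<close> satisfies \<open>N / ln T n \<longrightarrow> 1\<close> in probability. Conditionally on the set of selected
  indices, which is independent of the summands, the random sum is a sum of \<open>N\<close> i.i.d. copies
  of \<open>\<Delta>\<close>; dividing it by \<open>(ln T n) powr \<alpha>\<close> instead of \<open>N powr \<alpha>\<close> only rescales by a factor
  close to 1. Weak convergence of the normalised sums is uniform under such rescalings, because a
  weakly convergent sequence is tight and a bounded continuous function is uniformly continuous
  on compact balls.\<close>

section \<open>Logarithmic increments\<close>

lemma ln_diff_bounds:
  fixes a b :: real
  assumes "0 < a" "0 < b"
  shows "(b - a) / b \<le> ln b - ln a" and "ln b - ln a \<le> (b - a) / a"
proof -
  have "ln (a / b) \<le> a / b - 1" and "ln (b / a) \<le> b / a - 1"
    using assms by (simp_all add: ln_le_minus_one)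
  then show "(b - a) / b \<le> ln b - ln a" and "ln b - ln a \<le> (b - a) / a"
    using assms by (simp_all add: ln_div diff_divide_distrib)
qed

lemma sum_relative_increments_le_ln:
  fixes x :: "nat \<Rightarrow> real"
  assumes "\<And>i. 1 \<le> x i"
  shows "(\<Sum>i\<in>{1..<n}. (x (Suc i) - x i) / x (Suc i)) \<le> ln (x n)"
proof (cases "1 \<le> n")
  case True
  have "(\<Sum>i\<in>{1..<n}. (x (Suc i) - x i) / x (Suc i)) \<le> (\<Sum>i\<in>{1..<n}. ln (x (Suc i)) - ln (x i))"
    using assms by (intro sum_mono ln_diff_bounds(1)) (auto intro: less_le_trans[of 0 1])
  also have "\<dots> = ln (x n) - ln (x 1)"
    using True by (rule sum_Suc_diff')
  also have "\<dots> \<le> ln (x n)"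
    using assms[of 1] by simp
  finally show ?thesis .
qed (use assms[of n] in simp)

text \<open>The relative increment and the increment of \<open>ln x\<close> differ at most by the factor
  \<open>x (i+1) / x i\<close>, which tends to 1; the divergence of \<open>ln x\<close> absorbs the initial terms.\<close>
lemma sum_relative_increments_close_ln:
  fixes x :: "nat \<Rightarrow> real"
  assumes ge_1: "\<And>i. 1 \<le> x i" and mono: "\<And>i. x i \<le> x (Suc i)"
    and ratio: "(\<lambda>i. x (Suc i) / x i) \<longlonglongrightarrow> 1"
    and diverge: "filterlim (\<lambda>n. ln (x n)) at_top sequentially"
    and "\<delta> > 0"
  shows "eventually (\<lambda>n. \<bar>(\<Sum>i\<in>{1..<n}. (x (Suc i) - x i) / x (Suc i)) - ln (x n)\<bar> \<le> \<delta> * ln (x n))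
           sequentially"
proof -
  define q where "q i = (x (Suc i) - x i) / x (Suc i)" for i
  have q_nonneg: "0 \<le> q i" for i
    unfolding q_def using ge_1[of "Suc i"] mono[of i] by simp
  have x_pos: "0 < x i" for i
    using ge_1[of i] by simp
  have "eventually (\<lambda>i. x (Suc i) / x i < 1 + \<delta>/2) sequentially"
    using ratio \<open>\<delta> > 0\<close> by (intro order_tendstoD) auto
  then obtain N0 where N0: "\<And>i. N0 \<le> i \<Longrightarrow> x (Suc i) / x i \<le> 1 + \<delta>/2"
    unfolding eventually_sequentially by (meson less_imp_le)
  define N where "N = max 1 N0"
  have "eventually (\<lambda>n. 2 * ln (x N) / \<delta> \<le> ln (x n)) sequentially"
    using diverge by (simp add: filterlim_at_top)
  with eventually_ge_at_top[of N] show ?thesis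
  proof eventually_elim
    case (elim n)
    have "ln (x n) - ln (x N) = (\<Sum>i\<in>{N..<n}. ln (x (Suc i)) - ln (x i))"
      using sum_Suc_diff'[of N n "\<lambda>i. ln (x i)"] elim by simp
    also have "\<dots> \<le> (\<Sum>i\<in>{N..<n}. (1 + \<delta>/2) * q i)"
    proof (intro sum_mono)
      fix i assume "i \<in> {N..<n}"
      then have "x (Suc i) / x i \<le> 1 + \<delta>/2"
        using N0 unfolding N_def by simp
      have "x (Suc i) / x i * q i = (x (Suc i) - x i) / x i"
        using x_pos[of i] x_pos[of "Suc i"] by (simp add: q_def)
      then have "ln (x (Suc i)) - ln (x i) \<le> x (Suc i) / x i * q i"
        using ln_diff_bounds(2)[OF x_pos[of i] x_pos[of "Suc i"]] by linarith
      with \<open>x (Suc i) / x i \<le> 1 + \<delta>/2\<close> show "ln (x (Suc i)) - ln (x i) \<le> (1 + \<delta>/2) * q i"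
        using q_nonneg[of i] by (meson mult_right_mono order_trans)
    qed
    also have "\<dots> \<le> (1 + \<delta>/2) * (\<Sum>i\<in>{1..<n}. q i)"
      unfolding sum_distrib_left[symmetric] using q_nonneg \<open>\<delta> > 0\<close>
      by (intro mult_left_mono sum_mono2) (auto simp: N_def)
    finally have lower: "ln (x n) - ln (x N) \<le> (1 + \<delta>/2) * (\<Sum>i\<in>{1..<n}. q i)" .
    have upper: "(\<Sum>i\<in>{1..<n}. q i) \<le> ln (x n)"
      unfolding q_def by (rule sum_relative_increments_le_ln[OF ge_1])
    have "ln (x N) \<le> \<delta>/2 * ln (x n)"
      using elim \<open>\<delta> > 0\<close> by (simp add: field_simps)
    moreover have "\<delta>/2 * (\<Sum>i\<in>{1..<n}. q i) \<le> \<delta>/2 * ln (x n)"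
      using upper \<open>\<delta> > 0\<close> by simp
    ultimately show ?case
      using lower upper unfolding q_def by (simp add: algebra_simps)
  qed
qed

lemma real_T: "real (T n) = of_int \<lfloor>exp (3 * real n powr (1/3))\<rfloor>"
proof -
  have "1 \<le> exp (3 * real n powr (1/3))"
    by simp
  then have "0 \<le> \<lfloor>exp (3 * real n powr (1/3))\<rfloor>"
    by linarith
  then show ?thesis
    unfolding T_def by simp
qed

lemma T_bounds:
  "exp (3 * real n powr (1/3)) - 1 < real (T n)" "real (T n) \<le> exp (3 * real n powr (1/3))"
  unfolding real_T by linarith+

lemma T_ge_1: "1 \<le> real (T n)"
  unfolding real_T by (simp add: le_floor_iff)

lemma T_le_T_Suc: "real (T n) \<le> real (T (Suc n))"
proof -
  have "real n powr (1/3) \<le> real (Suc n) powr (1/3)"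
    by (intro powr_mono2) auto
  then show ?thesis
    unfolding real_T by (simp add: floor_mono)
qed

lemma T_Suc_ratio_tendsto_1: "(\<lambda>n. real (T (Suc n)) / real (T n)) \<longlonglongrightarrow> 1"
proof (rule tendsto_sandwich)
  have "1 \<le> real (T (Suc n)) / real (T n)" for n
    using T_le_T_Suc[of n] T_ge_1[of n] by simp
  then show "eventually (\<lambda>n. 1 \<le> real (T (Suc n)) / real (T n)) sequentially"
    by simp
  have "eventually (\<lambda>n::nat. 0 < exp (3 * real n powr (1/3)) - 1) at_top"
    by real_asymp
  then show "eventually (\<lambda>n. real (T (Suc n)) / real (T n)
      \<le> exp (3 * real (Suc n) powr (1/3)) / (exp (3 * real n powr (1/3)) - 1)) sequentially"
  proof eventually_elim
    case (elim n)
    show ?case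
      using T_bounds(2)[of "Suc n"] T_bounds(1)[of n] elim by (intro frac_le) auto
  qed
  show "(\<lambda>n::nat. exp (3 * real (Suc n) powr (1/3)) / (exp (3 * real n powr (1/3)) - 1)) \<longlonglongrightarrow> 1"
    by real_asymp
qed simp

lemma ln_T_tendsto_at_top: "filterlim (\<lambda>n. ln (real (T n))) at_top sequentially"
proof (rule filterlim_at_top_mono)
  show "filterlim (\<lambda>n::nat. ln (exp (3 * real n powr (1/3)) - 1)) at_top at_top"
    by real_asymp
  have "eventually (\<lambda>n::nat. 0 < exp (3 * real n powr (1/3)) - 1) at_top"
    by real_asymp
  then show "eventually (\<lambda>n. ln (exp (3 * real n powr (1/3)) - 1) \<le> ln (real (T n))) sequentially"
  proof eventually_elim
    case (elim n)
    then show ?case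
      using T_bounds(1)[of n] T_ge_1[of n] by (subst ln_le_cancel_iff) auto
  qed
qed

section \<open>Weak convergence under rescaling\<close>

lemma integrable_bounded_continuous:
  fixes g :: "'a::euclidean_space \<Rightarrow> real"
  assumes "prob_space N" "sets N = sets borel" "continuous_on UNIV g" "\<And>x. \<bar>g x\<bar> \<le> B"
  shows "integrable N g"
proof -
  interpret prob_space N by fact
  have "g \<in> borel_measurable N"
    using borel_measurable_continuous_onI[OF assms(3)] by (simp add: measurable_cong_sets[OF assms(2) refl])
  then show ?thesis
    using assms(4) by (intro integrable_const_bound[of _ B]) auto
qed

lemma abs_integral_le_bound:
  fixes g :: "'a::euclidean_space \<Rightarrow> real"
  assumes "prob_space N" "sets N = sets borel" "continuous_on UNIV g" "\<And>x. \<bar>g x\<bar> \<le> B"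
  shows "\<bar>\<integral>x. g x \<partial>N\<bar> \<le> B"
proof -
  interpret prob_space N by fact
  have "\<bar>\<integral>x. g x \<partial>N\<bar> \<le> (\<integral>x. B \<partial>N)"
    using assms integrable_bounded_continuous[OF assms] by (intro integral_abs_bound_integral) auto
  then show ?thesis
    by (simp add: prob_space)
qed

definition ball_cutoff :: "real \<Rightarrow> 'a::real_normed_vector \<Rightarrow> real" where
  "ball_cutoff r y = max 0 (min 1 (r + 1 - norm y))"

lemma continuous_on_ball_cutoff: "continuous_on S (ball_cutoff r)"
  unfolding ball_cutoff_def by (intro continuous_intros)

lemma ball_cutoff_bounds: "0 \<le> ball_cutoff r y" "ball_cutoff r y \<le> 1" "\<bar>ball_cutoff r y\<bar> \<le> 1"
  unfolding ball_cutoff_def by auto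

lemma bounded_range_ball_cutoff: "bounded (range (ball_cutoff r))"
  using ball_cutoff_bounds(3) unfolding bounded_iff by (intro exI[of _ 1]) auto

lemma indicator_cball_le_ball_cutoff: "indicator (cball 0 r) y \<le> ball_cutoff r y"
  unfolding ball_cutoff_def by (simp add: indicator_def)

lemma integrable_ball_cutoff:
  assumes "prob_space N" "sets N = sets borel"
  shows "integrable N (ball_cutoff r :: 'a::euclidean_space \<Rightarrow> real)"
  using assms continuous_on_ball_cutoff ball_cutoff_bounds(3) by (rule integrable_bounded_continuous)

lemma conv_in_distr_tight:
  fixes \<nu> :: "nat \<Rightarrow> 'a::euclidean_space measure"
  assumes "prob_space L" "sets L = sets borel" "conv_in_distr \<nu> L" "\<delta> > 0"
  shows "\<exists>r\<ge>0. eventually (\<lambda>k. 1 - \<delta> < (\<integral>y. ball_cutoff r y \<partial>\<nu> k)) sequentially"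
proof -
  interpret L: prob_space L by fact
  have space_L: "space L = UNIV"
    using sets_eq_imp_space_eq[OF assms(2)] by simp
  have "(\<lambda>m. measure L (cball 0 (real m))) \<longlonglongrightarrow> measure L (\<Union>m. cball (0::'a) (real m))"
    by (rule L.finite_Lim_measure_incseq) (auto simp: assms(2) incseq_def)
  also have "(\<Union>m. cball (0::'a) (real m)) = space L"
    by (auto simp: space_L mem_cball) (metis real_arch_simple)
  finally have "eventually (\<lambda>m. 1 - \<delta> < measure L (cball 0 (real m))) sequentially"
    using \<open>\<delta> > 0\<close> L.prob_space by (intro order_tendstoD) auto
  then obtain m where m: "1 - \<delta> < measure L (cball 0 (real m))"
    by (auto simp: eventually_sequentially)
  have "measure L (cball 0 (real m)) = (\<integral>y. indicator (cball 0 (real m)) y \<partial>L)"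
    by (simp add: assms(2))
  also have "\<dots> \<le> (\<integral>y. ball_cutoff (real m) y \<partial>L)"
    using indicator_cball_le_ball_cutoff integrable_ball_cutoff[OF assms(1,2)]
    by (intro integral_mono integrable_real_indicator)
       (auto simp: assms(2) L.emeasure_finite less_top[symmetric])
  finally have "1 - \<delta> < (\<integral>y. ball_cutoff (real m) y \<partial>L)"
    using m by simp
  moreover have "(\<lambda>k. \<integral>y. ball_cutoff (real m) y \<partial>\<nu> k) \<longlonglongrightarrow> (\<integral>y. ball_cutoff (real m) y \<partial>L)"
    using assms(3) continuous_on_ball_cutoff bounded_range_ball_cutoff
    unfolding conv_in_distr_def by blast
  ultimately show ?thesis
    by (intro exI[of _ "real m"]) (auto intro: order_tendstoD)
qed

lemma rescale_close_off_cutoff: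
  fixes f :: "'a::euclidean_space \<Rightarrow> real"
  assumes f: "continuous_on UNIV f" "\<And>x. \<bar>f x\<bar> \<le> B" and "0 \<le> r" "\<epsilon> > 0"
  shows "\<exists>\<eta>>0. \<forall>c y. \<bar>c - 1\<bar> < \<eta> \<longrightarrow> \<bar>f (c *\<^sub>R y) - f y\<bar> \<le> \<epsilon> + 2 * B * (1 - ball_cutoff r y)"
proof -
  have "uniformly_continuous_on (cball (0::'a) (2 * r + 2)) f"
    by (rule compact_uniformly_continuous) (auto intro: continuous_on_subset[OF f(1)])
  then obtain \<rho> where "\<rho> > 0" and \<rho>: "\<And>x x'. x \<in> cball 0 (2 * r + 2) \<Longrightarrow> x' \<in> cball 0 (2 * r + 2) \<Longrightarrow>
      dist x' x < \<rho> \<Longrightarrow> dist (f x') (f x) < \<epsilon>"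
    unfolding uniformly_continuous_on_def using \<open>\<epsilon> > 0\<close> by metis
  define \<eta> where "\<eta> = min 1 (\<rho> / (r + 2))"
  have "\<bar>f (c *\<^sub>R y) - f y\<bar> \<le> \<epsilon> + 2 * B * (1 - ball_cutoff r y)" if "\<bar>c - 1\<bar> < \<eta>" for c y
  proof (cases "norm y \<le> r + 1")
    case True
    have "norm (c *\<^sub>R y - y) = \<bar>c - 1\<bar> * norm y"
      by (metis norm_scaleR scaleR_diff_left scaleR_one)
    also have "\<dots> \<le> \<rho> / (r + 2) * (r + 1)"
      using that True unfolding \<eta>_def by (intro mult_mono) auto
    also have "\<dots> < \<rho>"
      using \<open>\<rho> > 0\<close> \<open>0 \<le> r\<close> by (simp add: field_simps)
    finally have "dist (c *\<^sub>R y) y < \<rho>"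
      by (simp add: dist_norm)
    moreover have "\<bar>c\<bar> \<le> 2"
      using that unfolding \<eta>_def by linarith
    then have "norm (c *\<^sub>R y) \<le> 2 * (r + 1)"
      using True mult_mono[of "\<bar>c\<bar>" 2 "norm y" "r + 1"] by simp
    ultimately have "\<bar>f (c *\<^sub>R y) - f y\<bar> < \<epsilon>"
      using \<rho>[of y "c *\<^sub>R y"] True \<open>0 \<le> r\<close> by (simp add: dist_real_def)
    moreover have "0 \<le> 2 * B * (1 - ball_cutoff r y)"
      using f(2)[of 0] ball_cutoff_bounds[of r y] by simp
    ultimately show ?thesis
      by linarith
  next
    case False
    then have "ball_cutoff r y = 0"
      unfolding ball_cutoff_def by auto
    then show ?thesis
      using f(2)[of "c *\<^sub>R y"] f(2)[of y] \<open>\<epsilon> > 0\<close> by auto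
  qed
  moreover have "\<eta> > 0"
    unfolding \<eta>_def using \<open>\<rho> > 0\<close> \<open>0 \<le> r\<close> by simp
  ultimately show ?thesis
    by blast
qed

text \<open>Slutsky's lemma for deterministic factors, uniformly in the factor: tightness of the
  sequence confines the rescaling error to a compact ball, where \<open>f\<close> is uniformly continuous.\<close>
lemma conv_in_distr_rescaled_uniformly:
  fixes \<nu> :: "nat \<Rightarrow> 'a::euclidean_space measure" and f :: "'a \<Rightarrow> real"
  assumes \<nu>: "\<And>k. prob_space (\<nu> k)" "\<And>k. sets (\<nu> k) = sets borel"
    and L: "prob_space L" "sets L = sets borel" and conv: "conv_in_distr \<nu> L"
    and f: "continuous_on UNIV f" "bounded (range f)" and "\<epsilon> > 0"
  shows "\<exists>K \<eta>. \<eta> > 0 \<and>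
           (\<forall>k\<ge>K. \<forall>c. \<bar>c - 1\<bar> < \<eta> \<longrightarrow> \<bar>(\<integral>y. f (c *\<^sub>R y) \<partial>\<nu> k) - (\<integral>y. f y \<partial>L)\<bar> < \<epsilon>)"
proof -
  obtain B where "B > 0" and B: "\<And>x. \<bar>f x\<bar> \<le> B"
    using f(2) unfolding bounded_pos by auto
  define \<delta> where "\<delta> = \<epsilon> / (16 * B)"
  have "\<delta> > 0"
    unfolding \<delta>_def using \<open>\<epsilon> > 0\<close> \<open>B > 0\<close> by simp
  then obtain r where "0 \<le> r" and tight: "eventually (\<lambda>k. 1 - \<delta> < (\<integral>y. ball_cutoff r y \<partial>\<nu> k)) sequentially"
    using conv_in_distr_tight[OF L conv] by blast
  have "(\<lambda>k. \<integral>y. f y \<partial>\<nu> k) \<longlonglongrightarrow> (\<integral>y. f y \<partial>L)"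
    using conv f unfolding conv_in_distr_def by blast
  then have "eventually (\<lambda>k. \<bar>(\<integral>y. f y \<partial>\<nu> k) - (\<integral>y. f y \<partial>L)\<bar> < \<epsilon>/2) sequentially"
    using \<open>\<epsilon> > 0\<close> unfolding tendsto_iff dist_real_def by (meson half_gt_zero)
  from eventually_conj[OF tight this] obtain K where K: "\<And>k. K \<le> k \<Longrightarrow>
      1 - \<delta> < (\<integral>y. ball_cutoff r y \<partial>\<nu> k) \<and> \<bar>(\<integral>y. f y \<partial>\<nu> k) - (\<integral>y. f y \<partial>L)\<bar> < \<epsilon>/2"
    unfolding eventually_sequentially by blast
  obtain \<eta> where "\<eta> > 0" and \<eta>: "\<And>c y. \<bar>c - 1\<bar> < \<eta> \<Longrightarrow>
      \<bar>f (c *\<^sub>R y) - f y\<bar> \<le> \<epsilon>/4 + 2 * B * (1 - ball_cutoff r y)"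
    using rescale_close_off_cutoff[OF f(1) B \<open>0 \<le> r\<close>, of "\<epsilon>/4"] \<open>\<epsilon> > 0\<close> by auto
  have "\<bar>(\<integral>y. f (c *\<^sub>R y) \<partial>\<nu> k) - (\<integral>y. f y \<partial>L)\<bar> < \<epsilon>" if "K \<le> k" "\<bar>c - 1\<bar> < \<eta>" for k c
  proof -
    interpret prob_space "\<nu> k" by (rule \<nu>(1))
    have f_scaled: "continuous_on UNIV (\<lambda>y. f (c *\<^sub>R y))"
      by (intro continuous_on_compose2[OF f(1)] continuous_intros) auto
    note integrable = integrable_bounded_continuous[OF \<nu>]
    have "\<bar>(\<integral>y. f (c *\<^sub>R y) \<partial>\<nu> k) - (\<integral>y. f y \<partial>\<nu> k)\<bar> = \<bar>\<integral>y. f (c *\<^sub>R y) - f y \<partial>\<nu> k\<bar>"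
      using integrable[OF f_scaled B] integrable[OF f(1) B] by simp
    also have "\<dots> \<le> (\<integral>y. \<epsilon>/4 + 2 * B * (1 - ball_cutoff r y) \<partial>\<nu> k)"
      using integrable[OF f_scaled B] integrable[OF f(1) B] integrable_ball_cutoff[OF \<nu>] \<eta>[OF that(2)]
      by (intro integral_abs_bound_integral) auto
    also have "\<dots> = \<epsilon>/4 + 2 * B * (1 - (\<integral>y. ball_cutoff r y \<partial>\<nu> k))"
      using integrable_ball_cutoff[OF \<nu>] prob_space
      by (simp add: algebra_simps)
    also have "\<dots> \<le> \<epsilon>/4 + 2 * B * \<delta>"
      using K[OF that(1)] \<open>B > 0\<close> by (intro add_left_mono mult_left_mono) auto
    also have "\<dots> < \<epsilon>/2"
      unfolding \<delta>_def using \<open>B > 0\<close> \<open>\<epsilon> > 0\<close> by (simp add: field_simps)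
    finally show ?thesis
      using K[OF that(1)] by linarith
  qed
  with \<open>\<eta> > 0\<close> show ?thesis
    by blast
qed

section \<open>Sums of i.i.d. variables and random indices\<close>

fun conv_power :: "'a::euclidean_space measure \<Rightarrow> nat \<Rightarrow> 'a measure" where
  "conv_power D 0 = return borel 0"
| "conv_power D (Suc k) = distr (D \<Otimes>\<^sub>M conv_power D k) borel (\<lambda>(x, y). x + y)"

lemma sets_conv_power [simp]: "sets (conv_power D k) = sets borel"
  by (cases k) simp_all

lemma prob_space_conv_power:
  assumes "prob_space D" "sets D = sets borel"
  shows "prob_space (conv_power D k)"
proof (induction k)
  case 0
  show ?case
    by (simp add: prob_space_return)
next
  case (Suc k)
  interpret pair_prob_space D "conv_power D k"
    using assms(1) Suc.IH by (simp add: pair_prob_space_def pair_sigma_finite_def prob_space_imp_sigma_finite)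
  have [measurable_cong]: "sets D = sets borel" "sets (conv_power D k) = sets borel"
    by (simp_all add: assms(2))
  show ?case
    unfolding conv_power.simps by (rule P.prob_space_distr) measurable
qed

lemma (in prob_space) indep_vars_sum_euclidean:
  fixes X :: "'i \<Rightarrow> 'a \<Rightarrow> 'b::euclidean_space"
  assumes "finite I" "i \<notin> I" and indep: "indep_vars (\<lambda>_. borel) X (insert i I)"
  shows "indep_var borel (X i) borel (\<lambda>\<omega>. \<Sum>i\<in>I. X i \<omega>)"
proof -
  have "indep_var
    borel ((\<lambda>f. f i) \<circ> (\<lambda>\<omega>. restrict (\<lambda>i. X i \<omega>) {i}))
    borel ((\<lambda>f. \<Sum>i\<in>I. f i) \<circ> (\<lambda>\<omega>. restrict (\<lambda>i. X i \<omega>) I))"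
    using assms by (intro indep_var_compose[OF indep_var_restrict[OF indep]]) auto
  also have "(\<lambda>f. \<Sum>i\<in>I. f i) \<circ> (\<lambda>\<omega>. restrict (\<lambda>i. X i \<omega>) I) = (\<lambda>\<omega>. \<Sum>i\<in>I. X i \<omega>)"
    by (auto cong: rev_conj_cong)
  finally show ?thesis
    by (simp add: comp_def)
qed

lemma (in prob_space) distr_sum_iid:
  fixes X :: "'i \<Rightarrow> 'a \<Rightarrow> 'b::euclidean_space"
  assumes indep: "indep_vars (\<lambda>_. borel) X I" and law: "\<And>i. i \<in> I \<Longrightarrow> distr M borel (X i) = D"
    and "finite J" "J \<subseteq> I"
  shows "distr M borel (\<lambda>\<omega>. \<Sum>i\<in>J. X i \<omega>) = conv_power D (card J)"
  using \<open>finite J\<close> \<open>J \<subseteq> I\<close>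
proof (induction J rule: finite_induct)
  case empty
  show ?case
    by (simp add: distr_const)
next
  case (insert j J)
  have measurable_X: "X i \<in> borel_measurable M" if "i \<in> I" for i
    using indep that unfolding indep_vars_def by auto
  have "indep_var borel (X j) borel (\<lambda>\<omega>. \<Sum>i\<in>J. X i \<omega>)"
    using insert.hyps indep_vars_subset[OF indep insert.prems] by (rule indep_vars_sum_euclidean)
  then have "distr M (borel \<Otimes>\<^sub>M borel) (\<lambda>\<omega>. (X j \<omega>, \<Sum>i\<in>J. X i \<omega>)) = D \<Otimes>\<^sub>M conv_power D (card J)"
    using insert law by (simp add: indep_var_distribution_eq)
  moreover have "(\<lambda>\<omega>. (X j \<omega>, \<Sum>i\<in>J. X i \<omega>)) \<in> measurable M (borel \<Otimes>\<^sub>M borel)"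
    using insert.prems measurable_X by (intro measurable_Pair borel_measurable_sum) auto
  moreover have "(\<lambda>(x::'b, y). x + y) \<in> measurable (borel \<Otimes>\<^sub>M borel) borel"
    by measurable
  ultimately have "distr M borel ((\<lambda>(x, y). x + y) \<circ> (\<lambda>\<omega>. (X j \<omega>, \<Sum>i\<in>J. X i \<omega>)))
      = conv_power D (Suc (card J))"
    by (metis (no_types, lifting) conv_power.simps(2) distr_distr)
  then show ?case
    using insert.hyps by (simp add: comp_def)
qed

lemma (in prob_space) distr_scaled_sum_iid:
  fixes X :: "'i \<Rightarrow> 'a \<Rightarrow> 'b::euclidean_space"
  assumes indep: "indep_vars (\<lambda>_. borel) X I" and law: "\<And>i. i \<in> I \<Longrightarrow> distr M borel (X i) = D"
    and "finite J" "J \<subseteq> I"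
  shows "distr M borel (\<lambda>\<omega>. c *\<^sub>R (\<Sum>i\<in>J. X i \<omega>)) = distr (conv_power D (card J)) borel (\<lambda>x. c *\<^sub>R x)"
proof -
  have "X i \<in> borel_measurable M" if "i \<in> J" for i
    using indep that \<open>J \<subseteq> I\<close> unfolding indep_vars_def by auto
  then have "distr M borel (\<lambda>\<omega>. c *\<^sub>R (\<Sum>i\<in>J. X i \<omega>))
      = distr (distr M borel (\<lambda>\<omega>. \<Sum>i\<in>J. X i \<omega>)) borel (\<lambda>x. c *\<^sub>R x)"
    by (subst distr_distr) (auto simp: comp_def)
  then show ?thesis
    using distr_sum_iid[OF assms] by simp
qed

text \<open>Rescaling a sum of \<open>k\<close> i.i.d. terms by \<open>\<mu> powr -\<alpha>\<close> instead of \<open>k powr -\<alpha>\<close> changes the scale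
  by the factor \<open>(k / \<mu>) powr \<alpha>\<close>, which is uniformly close to 1 when \<open>k / \<mu>\<close> is.\<close>
lemma conv_power_rescaled_close:
  fixes D L :: "'a::euclidean_space measure" and f :: "'a \<Rightarrow> real"
  assumes D: "prob_space D" "sets D = sets borel" and L: "prob_space L" "sets L = sets borel"
    and normalized: "conv_in_distr (\<lambda>k. distr (conv_power D k) borel (\<lambda>x. real k powr (-\<alpha>) *\<^sub>R x)) L"
    and f: "continuous_on UNIV f" "bounded (range f)"
    and \<mu>: "filterlim \<mu> at_top sequentially" and "\<epsilon> > 0"
  shows "\<exists>\<delta>>0. eventually (\<lambda>n. \<forall>k. \<bar>real k - \<mu> n\<bar> < \<delta> * \<mu> n \<longrightarrow>
           \<bar>(\<integral>x. f ((1 / \<mu> n powr \<alpha>) *\<^sub>R x) \<partial>conv_power D k) - (\<integral>y. f y \<partial>L)\<bar> < \<epsilon>) sequentially"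
proof -
  have f_measurable [measurable]: "f \<in> borel_measurable borel"
    using f(1) by (rule borel_measurable_continuous_onI)
  have "prob_space (distr (conv_power D k) borel (\<lambda>x. real k powr (-\<alpha>) *\<^sub>R x))" for k
    by (rule prob_space.prob_space_distr[OF prob_space_conv_power[OF D]])
       (subst measurable_cong_sets[OF sets_conv_power refl], measurable)
  moreover have "sets (distr (conv_power D k) borel (\<lambda>x. real k powr (-\<alpha>) *\<^sub>R x)) = sets borel" for k
    by simp
  ultimately obtain K \<eta> where "\<eta> > 0" and K: "\<And>k c. K \<le> k \<Longrightarrow> \<bar>c - 1\<bar> < \<eta> \<Longrightarrow>
      \<bar>(\<integral>y. f (c *\<^sub>R y) \<partial>distr (conv_power D k) borel (\<lambda>x. real k powr (-\<alpha>) *\<^sub>R x)) - (\<integral>y. f y \<partial>L)\<bar> < \<epsilon>"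
    using conv_in_distr_rescaled_uniformly[OF _ _ L normalized f \<open>\<epsilon> > 0\<close>] by blast
  have "isCont (\<lambda>x::real. x powr \<alpha>) 1"
    by (auto intro!: continuous_intros)
  then obtain \<delta>0 where "\<delta>0 > 0" and \<delta>0: "\<And>x. \<bar>x - 1\<bar> < \<delta>0 \<Longrightarrow> \<bar>x powr \<alpha> - 1\<bar> < \<eta>"
    using \<open>\<eta> > 0\<close> unfolding continuous_at_eps_delta dist_real_def by fastforce
  define \<delta> where "\<delta> = min \<delta>0 (1/2)"
  have "eventually (\<lambda>n. 2 * real K + 2 \<le> \<mu> n) sequentially"
    using \<mu> by (simp add: filterlim_at_top)
  then have "eventually (\<lambda>n. \<forall>k. \<bar>real k - \<mu> n\<bar> < \<delta> * \<mu> n \<longrightarrow>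
      \<bar>(\<integral>x. f ((1 / \<mu> n powr \<alpha>) *\<^sub>R x) \<partial>conv_power D k) - (\<integral>y. f y \<partial>L)\<bar> < \<epsilon>) sequentially"
  proof eventually_elim
    case (elim n)
    show ?case
    proof (intro allI impI)
      fix k
      assume k: "\<bar>real k - \<mu> n\<bar> < \<delta> * \<mu> n"
      have "\<mu> n > 0"
        using elim by linarith
      have "\<delta> * \<mu> n \<le> 1/2 * \<mu> n" "\<delta> * \<mu> n \<le> \<delta>0 * \<mu> n"
        using \<open>\<mu> n > 0\<close> unfolding \<delta>_def by (simp_all add: mult_right_mono)
      then have "real k > \<mu> n / 2"
        using k by (simp add: abs_less_iff)
      then have "K \<le> k" "real k > 0"
        using elim \<open>\<mu> n > 0\<close> by linarith+
      define c where "c = (real k / \<mu> n) powr \<alpha>"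
      have "\<bar>real k / \<mu> n - 1\<bar> = \<bar>real k - \<mu> n\<bar> / \<mu> n"
        using \<open>\<mu> n > 0\<close> by (simp add: field_simps)
      also have "\<dots> < \<delta>0"
      proof -
        have "\<bar>real k - \<mu> n\<bar> < \<delta>0 * \<mu> n"
          using k \<open>\<delta> * \<mu> n \<le> \<delta>0 * \<mu> n\<close> by linarith
        then show ?thesis
          using \<open>\<mu> n > 0\<close> by (simp add: divide_less_eq)
      qed
      finally have "\<bar>c - 1\<bar> < \<eta>"
        unfolding c_def by (rule \<delta>0)
      moreover have "(\<integral>y. f (c *\<^sub>R y) \<partial>distr (conv_power D k) borel (\<lambda>x. real k powr (-\<alpha>) *\<^sub>R x))
          = (\<integral>x. f (c *\<^sub>R (real k powr (-\<alpha>) *\<^sub>R x)) \<partial>conv_power D k)"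
        by (rule integral_distr) (subst measurable_cong_sets[OF sets_conv_power refl], measurable)
      moreover have "c * real k powr (-\<alpha>) = 1 / \<mu> n powr \<alpha>"
        unfolding c_def using \<open>real k > 0\<close> \<open>\<mu> n > 0\<close> by (simp add: powr_divide powr_minus)
      ultimately show "\<bar>(\<integral>x. f ((1 / \<mu> n powr \<alpha>) *\<^sub>R x) \<partial>conv_power D k) - (\<integral>y. f y \<partial>L)\<bar> < \<epsilon>"
        using K[OF \<open>K \<le> k\<close> \<open>\<bar>c - 1\<bar> < \<eta>\<close>] by simp
    qed
  qed
  moreover have "\<delta> > 0"
    unfolding \<delta>_def using \<open>\<delta>0 > 0\<close> by simp
  ultimately show ?thesis
    by blast
qed

lemma measurable_card_Collect:
  fixes R :: "'i \<Rightarrow> 'b \<Rightarrow> bool"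
  assumes "finite A" and [measurable]: "\<And>i. R i \<in> measurable M (count_space UNIV)"
  shows "(\<lambda>\<omega>. card {i\<in>A. R i \<omega>}) \<in> measurable M (count_space UNIV)"
  using \<open>finite A\<close>
proof (induction A rule: finite_induct)
  case (insert a A)
  have "{i\<in>insert a A. R i \<omega>} = (if R a \<omega> then insert a {i\<in>A. R i \<omega>} else {i\<in>A. R i \<omega>})" for \<omega>
    by auto
  then have "(\<lambda>\<omega>. card {i\<in>insert a A. R i \<omega>})
      = (\<lambda>\<omega>. if R a \<omega> then Suc (card {i\<in>A. R i \<omega>}) else card {i\<in>A. R i \<omega>})"
    using insert.hyps by (simp add: fun_eq_iff)
  also have "\<dots> \<in> measurable M (count_space UNIV)"
    using insert.IH by measurable
  finally show ?case .
qed simp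

lemma (in prob_space) integral_random_index_tendsto:
  fixes \<Phi> :: "nat \<Rightarrow> nat \<Rightarrow> real" and N :: "nat \<Rightarrow> 'a \<Rightarrow> nat" and \<mu> :: "nat \<Rightarrow> real"
  assumes N_measurable [measurable]: "\<And>n. N n \<in> measurable M (count_space UNIV)"
    and bounded: "\<And>n k. \<bar>\<Phi> n k\<bar> \<le> B" "\<bar>c\<bar> \<le> B"
    and close: "\<And>\<epsilon>. \<epsilon> > 0 \<Longrightarrow>
      \<exists>\<delta>>0. eventually (\<lambda>n. \<forall>k. \<bar>real k - \<mu> n\<bar> < \<delta> * \<mu> n \<longrightarrow> \<bar>\<Phi> n k - c\<bar> < \<epsilon>) sequentially"
    and concentrated: "\<And>\<delta>. \<delta> > 0 \<Longrightarrow>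
      (\<lambda>n. prob {\<omega>\<in>space M. \<delta> * \<mu> n \<le> \<bar>real (N n \<omega>) - \<mu> n\<bar>}) \<longlonglongrightarrow> 0"
  shows "(\<lambda>n. \<integral>\<omega>. \<Phi> n (N n \<omega>) \<partial>M) \<longlonglongrightarrow> c"
proof (rule tendstoI)
  fix \<epsilon> :: real
  assume "\<epsilon> > 0"
  then obtain \<delta> where "\<delta> > 0"
    and near: "eventually (\<lambda>n. \<forall>k. \<bar>real k - \<mu> n\<bar> < \<delta> * \<mu> n \<longrightarrow> \<bar>\<Phi> n k - c\<bar> < \<epsilon>/2) sequentially"
    using close[of "\<epsilon>/2"] by auto
  define far where "far n = {\<omega>\<in>space M. \<delta> * \<mu> n \<le> \<bar>real (N n \<omega>) - \<mu> n\<bar>}" for n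
  have far_sets [measurable]: "far n \<in> sets M" for n
    unfolding far_def by measurable
  have "(\<lambda>n. 2 * B * prob (far n)) \<longlonglongrightarrow> 2 * B * 0"
    unfolding far_def by (intro tendsto_mult_left concentrated \<open>\<delta> > 0\<close>)
  then have "eventually (\<lambda>n. 2 * B * prob (far n) < \<epsilon>/2) sequentially"
    using \<open>\<epsilon> > 0\<close> by (intro order_tendstoD) auto
  with near show "eventually (\<lambda>n. dist (\<integral>\<omega>. \<Phi> n (N n \<omega>) \<partial>M) c < \<epsilon>) sequentially"
  proof eventually_elim
    case (elim n)
    have integrable_\<Phi>: "integrable M (\<lambda>\<omega>. \<Phi> n (N n \<omega>))"
      using bounded(1) by (intro integrable_const_bound[of _ B]) auto
    have integrable_far: "integrable M (indicator (far n) :: 'a \<Rightarrow> real)"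
      by (intro integrable_real_indicator) (auto simp: emeasure_finite less_top[symmetric])
    have "\<bar>(\<integral>\<omega>. \<Phi> n (N n \<omega>) \<partial>M) - c\<bar> = \<bar>\<integral>\<omega>. \<Phi> n (N n \<omega>) - c \<partial>M\<bar>"
      using integrable_\<Phi> prob_space by simp
    also have "\<dots> \<le> (\<integral>\<omega>. \<bar>\<Phi> n (N n \<omega>) - c\<bar> \<partial>M)"
      by (rule integral_abs_bound)
    also have "\<dots> \<le> (\<integral>\<omega>. \<epsilon>/2 + 2 * B * indicator (far n) \<omega> \<partial>M)"
    proof (rule integral_mono)
      fix \<omega> assume "\<omega> \<in> space M"
      then show "\<bar>\<Phi> n (N n \<omega>) - c\<bar> \<le> \<epsilon>/2 + 2 * B * indicator (far n) \<omega>"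
        using elim(1) bounded(1)[of n "N n \<omega>"] bounded(2) \<open>\<epsilon> > 0\<close>
        by (cases "\<omega> \<in> far n") (auto simp: far_def not_le)
    qed (use integrable_\<Phi> integrable_far in auto)
    also have "\<dots> = \<epsilon>/2 + 2 * B * prob (far n)"
      using prob_space integrable_far by simp
    finally show ?case
      using elim(2) by (simp add: dist_real_def)
  qed
qed

section \<open>Randomly selected sums\<close>

lemma sum_Pow_indicator_eq:
  fixes H :: "'i set \<Rightarrow> real"
  assumes "finite A" "S \<subseteq> A"
  shows "(\<Sum>J\<in>Pow A. of_bool (S = J) * H J) = H S"
  using assms by (simp add: sum.delta)

locale random_selection = prob_space M for M :: "'b measure" +
  fixes D :: "'a::euclidean_space measure" and p :: "nat \<Rightarrow> real"
    and X :: "nat \<Rightarrow> 'b \<Rightarrow> 'a" and R :: "nat \<Rightarrow> 'b \<Rightarrow> bool"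
  assumes p_nonneg: "\<And>n. 0 \<le> p n" and p_le_1: "\<And>n. p n \<le> 1"
    and X_measurable [measurable]: "\<And>n. X n \<in> borel_measurable M"
    and X_distr: "\<And>n. distr M borel (X n) = D"
    and R_measurable [measurable]: "\<And>n. R n \<in> measurable M (count_space UNIV)"
    and R_distr: "\<And>n. distr M (count_space UNIV) (R n) = measure_pmf (bernoulli_pmf (p n))"
    and indep: "indep_sets
           (\<lambda>k. case k of
                   Inl n \<Rightarrow> {R n -` A \<inter> space M | A. A \<in> sets (count_space (UNIV :: bool set))}
                 | Inr n \<Rightarrow> {X n -` A \<inter> space M | A. A \<in> sets (borel :: 'a measure)})
           UNIV"
begin

lemma prob_space_D: "prob_space D"
  using prob_space_distr[OF X_measurable[of 0]] by (simp add: X_distr)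

lemma sets_D: "sets D = sets borel"
  using X_distr[of 0] by (metis sets_distr)

text \<open>The selectors are embedded into \<open>'a\<close>, so that selectors and summands together form a
  single independent family of \<open>'a\<close>-valued random variables.\<close>
definition Z :: "nat + nat \<Rightarrow> 'b \<Rightarrow> 'a" where
  "Z = case_sum (\<lambda>n \<omega>. of_bool (R n \<omega>) *\<^sub>R One) X"

lemma indep_vars_Z: "indep_vars (\<lambda>_. borel) Z UNIV"
  unfolding indep_vars_def2
proof (intro conjI ballI)
  show "Z k \<in> borel_measurable M" for k
    by (cases k) (simp_all add: Z_def)
  show "indep_sets (\<lambda>k. {Z k -` A \<inter> space M |A. A \<in> sets borel}) UNIV"
  proof (rule indep_sets_mono_sets[OF indep])
    fix k :: "nat + nat"
    show "{Z k -` A \<inter> space M |A. A \<in> sets borel} \<subseteq>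
      (case k of Inl n \<Rightarrow> {R n -` A \<inter> space M | A. A \<in> sets (count_space (UNIV :: bool set))}
                 | Inr n \<Rightarrow> {X n -` A \<inter> space M | A. A \<in> sets (borel :: 'a measure)})"
    proof (cases k)
      case (Inl n)
      have "Z k -` A \<inter> space M = R n -` {b. of_bool b *\<^sub>R One \<in> A} \<inter> space M" for A
        using Inl unfolding Z_def by auto
      then have "Z k -` A \<inter> space M \<in> {R n -` B \<inter> space M | B. B \<in> sets (count_space UNIV)}" for A
        by (intro CollectI exI[of _ "{b. of_bool b *\<^sub>R One \<in> A}"]) simp
      then show ?thesis
        using Inl by (intro subsetI) auto
    next
      case (Inr n)
      then show ?thesis
        unfolding Z_def by auto
    qed
  qed
qed

lemma distr_sum_X:
  assumes "finite J"
  shows "distr M borel (\<lambda>\<omega>. \<Sum>i\<in>J. X i \<omega>) = conv_power D (card J)"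
proof -
  have indep_Inr: "indep_vars (\<lambda>_. borel) Z (range Inr)"
    by (rule indep_vars_subset[OF indep_vars_Z]) simp
  have law_Inr: "distr M borel (Z k) = D" if "k \<in> range Inr" for k
    using that by (auto simp: Z_def X_distr)
  have "distr M borel (\<lambda>\<omega>. \<Sum>k\<in>Inr ` J. Z k \<omega>) = conv_power D (card (Inr ` J :: (nat + nat) set))"
    by (rule distr_sum_iid[OF indep_Inr law_Inr]) (use assms in auto)
  then show ?thesis
    by (simp add: Z_def sum.reindex card_image)
qed

lemma integral_fun_R:
  fixes g :: "bool \<Rightarrow> real"
  shows "(\<integral>\<omega>. g (R i \<omega>) \<partial>M) = p i * g True + (1 - p i) * g False"
proof -
  have "(\<integral>\<omega>. g (R i \<omega>) \<partial>M) = (\<integral>b. g b \<partial>measure_pmf (bernoulli_pmf (p i)))"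
    by (subst integral_distr[symmetric]) (simp_all add: R_distr[symmetric])
  then show ?thesis
    using p_nonneg[of i] p_le_1[of i] by simp
qed

lemma integral_of_bool_R_eq: "(\<integral>\<omega>. of_bool (R i \<omega> \<longleftrightarrow> b) \<partial>M) = (if b then p i else 1 - p i)"
  using integral_fun_R[of "\<lambda>x. of_bool (x \<longleftrightarrow> b)"] by simp

lemma integrable_fun_R:
  fixes g :: "bool \<Rightarrow> real"
  shows "integrable M (\<lambda>\<omega>. g (R i \<omega>))"
proof (rule integrable_const_bound[where B="\<bar>g True\<bar> + \<bar>g False\<bar>"])
  have "\<bar>g b\<bar> \<le> \<bar>g True\<bar> + \<bar>g False\<bar>" for b
    by (cases b) simp_all
  then show "AE \<omega> in M. norm (g (R i \<omega>)) \<le> \<bar>g True\<bar> + \<bar>g False\<bar>"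
    by simp
qed measurable

lemma integral_prod_fun_R:
  fixes g :: "nat \<Rightarrow> bool \<Rightarrow> real"
  assumes "finite K"
  shows "(\<integral>\<omega>. (\<Prod>i\<in>K. g i (R i \<omega>)) \<partial>M) = (\<Prod>i\<in>K. \<integral>\<omega>. g i (R i \<omega>) \<partial>M)"
proof -
  define Y where "Y k x = g (projl k) (x \<noteq> 0)" for k :: "nat + nat" and x :: 'a
  have Y_Z: "Y (Inl i) (Z (Inl i) \<omega>) = g i (R i \<omega>)" for i \<omega>
    by (simp add: Y_def Z_def One_neq_0)
  have "indep_vars (\<lambda>_. borel) (\<lambda>k \<omega>. Y k (Z k \<omega>)) (Inl ` K)"
    by (rule indep_vars_compose2[OF indep_vars_subset[OF indep_vars_Z]]) (auto simp: Y_def)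
  then have "(\<integral>\<omega>. (\<Prod>k\<in>Inl ` K. Y k (Z k \<omega>)) \<partial>M) = (\<Prod>k\<in>Inl ` K. \<integral>\<omega>. Y k (Z k \<omega>) \<partial>M)"
    using assms integrable_fun_R by (intro indep_vars_lebesgue_integral) (auto simp: Y_Z)
  then show ?thesis
    by (simp add: prod.reindex Y_Z)
qed

definition selection_prob :: "nat set \<Rightarrow> nat set \<Rightarrow> real" where
  "selection_prob A J = (\<Prod>i\<in>A. if i \<in> J then p i else 1 - p i)"

lemma of_bool_selected_eq:
  assumes "finite A" "J \<subseteq> A"
  shows "of_bool ({i\<in>A. R i \<omega>} = J) = (\<Prod>i\<in>A. of_bool (R i \<omega> \<longleftrightarrow> i \<in> J) :: real)"
proof (cases "{i\<in>A. R i \<omega>} = J")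
  case True
  then have "\<forall>i\<in>A. R i \<omega> \<longleftrightarrow> i \<in> J"
    using assms(2) by auto
  then show ?thesis
    using True by simp
next
  case False
  then obtain i where "i \<in> A" "\<not> (R i \<omega> \<longleftrightarrow> i \<in> J)"
    using assms(2) by auto
  then show ?thesis
    using False assms(1) by (auto simp: prod_zero_iff)
qed

lemma integrable_indicator_selected:
  assumes "finite A" "J \<subseteq> A"
  shows "integrable M (\<lambda>\<omega>. of_bool ({i\<in>A. R i \<omega>} = J) :: real)"
proof (rule integrable_const_bound[of _ 1])
  show "(\<lambda>\<omega>. of_bool ({i\<in>A. R i \<omega>} = J) :: real) \<in> borel_measurable M"
    unfolding of_bool_selected_eq[OF assms] by measurable
qed simp

lemma integral_indicator_selected:
  assumes "finite A" "J \<subseteq> A"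
  shows "(\<integral>\<omega>. of_bool ({i\<in>A. R i \<omega>} = J) \<partial>M) = selection_prob A J"
  using assms integral_prod_fun_R[of A "\<lambda>i b. of_bool (b \<longleftrightarrow> i \<in> J)"]
  by (simp add: of_bool_selected_eq integral_of_bool_R_eq selection_prob_def)

lemma integral_fun_selected:
  assumes "finite A"
  shows "(\<integral>\<omega>. G {i\<in>A. R i \<omega>} \<partial>M) = (\<Sum>J\<in>Pow A. selection_prob A J * G J)"
proof -
  have "(\<integral>\<omega>. G {i\<in>A. R i \<omega>} \<partial>M) = (\<integral>\<omega>. (\<Sum>J\<in>Pow A. of_bool ({i\<in>A. R i \<omega>} = J) * G J) \<partial>M)"
    using assms by (simp add: sum_Pow_indicator_eq)
  also have "\<dots> = (\<Sum>J\<in>Pow A. (\<integral>\<omega>. of_bool ({i\<in>A. R i \<omega>} = J) \<partial>M) * G J)"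
    using assms integrable_indicator_selected
    by (subst Bochner_Integration.integral_sum) (auto intro!: integrable_mult_left)
  finally show ?thesis
    using assms by (simp add: integral_indicator_selected)
qed

lemma integral_indicator_selected_mult:
  fixes h :: "'a \<Rightarrow> real"
  assumes "finite A" "J \<subseteq> A" and h: "h \<in> borel_measurable borel" "\<And>x. \<bar>h x\<bar> \<le> B"
  shows "(\<integral>\<omega>. of_bool ({i\<in>A. R i \<omega>} = J) * h (\<Sum>i\<in>J. X i \<omega>) \<partial>M)
    = selection_prob A J * (\<integral>x. h x \<partial>conv_power D (card J))"
proof -
  have "finite J"
    using assms(1,2) by (rule finite_subset[rotated])
  define g1 where "g1 x = (\<Prod>i\<in>A. of_bool (x (Inl i) \<noteq> 0 \<longleftrightarrow> i \<in> J) :: real)" for x :: "nat + nat \<Rightarrow> 'a"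
  define g2 where "g2 x = h (\<Sum>i\<in>J. x (Inr i))" for x :: "nat + nat \<Rightarrow> 'a"
  have "indep_var (\<Pi>\<^sub>M k\<in>Inl ` A. borel) (\<lambda>\<omega>. restrict (\<lambda>k. Z k \<omega>) (Inl ` A))
                  (\<Pi>\<^sub>M k\<in>Inr ` J. borel) (\<lambda>\<omega>. restrict (\<lambda>k. Z k \<omega>) (Inr ` J))"
    by (rule indep_var_restrict[OF indep_vars_Z]) auto
  moreover have "g1 \<in> borel_measurable (\<Pi>\<^sub>M k\<in>Inl ` A. borel)" "g2 \<in> borel_measurable (\<Pi>\<^sub>M k\<in>Inr ` J. borel)"
    unfolding g1_def g2_def using h(1) by measurable
  ultimately have "indep_var borel (g1 \<circ> (\<lambda>\<omega>. restrict (\<lambda>k. Z k \<omega>) (Inl ` A)))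
                             borel (g2 \<circ> (\<lambda>\<omega>. restrict (\<lambda>k. Z k \<omega>) (Inr ` J)))"
    by (rule indep_var_compose)
  moreover have "g1 \<circ> (\<lambda>\<omega>. restrict (\<lambda>k. Z k \<omega>) (Inl ` A)) = (\<lambda>\<omega>. of_bool ({i\<in>A. R i \<omega>} = J))"
    unfolding g1_def of_bool_selected_eq[OF assms(1,2)] by (simp add: fun_eq_iff Z_def One_neq_0)
  moreover have "g2 \<circ> (\<lambda>\<omega>. restrict (\<lambda>k. Z k \<omega>) (Inr ` J)) = (\<lambda>\<omega>. h (\<Sum>i\<in>J. X i \<omega>))"
    unfolding g2_def by (simp add: fun_eq_iff Z_def)
  ultimately have indep_factors:
    "indep_var borel (\<lambda>\<omega>. of_bool ({i\<in>A. R i \<omega>} = J) :: real) borel (\<lambda>\<omega>. h (\<Sum>i\<in>J. X i \<omega>))"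
    by simp
  have "integrable M (\<lambda>\<omega>. h (\<Sum>i\<in>J. X i \<omega>))"
    using h by (intro integrable_const_bound[of _ B]) auto
  then have "(\<integral>\<omega>. of_bool ({i\<in>A. R i \<omega>} = J) * h (\<Sum>i\<in>J. X i \<omega>) \<partial>M)
      = selection_prob A J * (\<integral>\<omega>. h (\<Sum>i\<in>J. X i \<omega>) \<partial>M)"
    using indep_var_lebesgue_integral[OF indep_factors integrable_indicator_selected[OF assms(1,2)]]
      integral_indicator_selected[OF assms(1,2)] by simp
  also have "(\<integral>\<omega>. h (\<Sum>i\<in>J. X i \<omega>) \<partial>M) = (\<integral>x. h x \<partial>conv_power D (card J))"
    using h(1) by (simp add: integral_distr distr_sum_X[OF \<open>finite J\<close>, symmetric])
  finally show ?thesis .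
qed

text \<open>Condition on the set of selected indices; it is independent of the summands.\<close>
lemma integral_fun_random_sum:
  fixes h :: "'a \<Rightarrow> real"
  assumes "finite A" and h: "h \<in> borel_measurable borel" "\<And>x. \<bar>h x\<bar> \<le> B"
  shows "(\<integral>\<omega>. h (\<Sum>i\<in>A. of_bool (R i \<omega>) *\<^sub>R X i \<omega>) \<partial>M)
    = (\<integral>\<omega>. (\<integral>x. h x \<partial>conv_power D (card {i\<in>A. R i \<omega>})) \<partial>M)"
proof -
  have "h (\<Sum>i\<in>A. of_bool (R i \<omega>) *\<^sub>R X i \<omega>)
      = (\<Sum>J\<in>Pow A. of_bool ({i\<in>A. R i \<omega>} = J) * h (\<Sum>i\<in>J. X i \<omega>))" for \<omega>
  proof -
    have "(\<Sum>i\<in>A. of_bool (R i \<omega>) *\<^sub>R X i \<omega>) = (\<Sum>i\<in>{i\<in>A. R i \<omega>}. X i \<omega>)"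
      using assms(1) by (subst sum.inter_filter) (auto intro!: sum.cong)
    then show ?thesis
      using sum_Pow_indicator_eq[OF assms(1), of "{i\<in>A. R i \<omega>}" "\<lambda>J. h (\<Sum>i\<in>J. X i \<omega>)"] by simp
  qed
  moreover have "integrable M (\<lambda>\<omega>. of_bool ({i\<in>A. R i \<omega>} = J) * h (\<Sum>i\<in>J. X i \<omega>))" if "J \<in> Pow A" for J
  proof (rule integrable_const_bound[of _ B])
    show "AE \<omega> in M. norm (of_bool ({i\<in>A. R i \<omega>} = J) * h (\<Sum>i\<in>J. X i \<omega>)) \<le> B"
      using h(2) order_trans[OF abs_ge_zero h(2)] by (simp add: abs_mult)
    show "(\<lambda>\<omega>. of_bool ({i\<in>A. R i \<omega>} = J) * h (\<Sum>i\<in>J. X i \<omega>)) \<in> borel_measurable M"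
      using that assms(1) h(1) unfolding of_bool_selected_eq[OF assms(1) PowD[OF that]] by measurable
  qed
  ultimately have "(\<integral>\<omega>. h (\<Sum>i\<in>A. of_bool (R i \<omega>) *\<^sub>R X i \<omega>) \<partial>M)
      = (\<Sum>J\<in>Pow A. \<integral>\<omega>. of_bool ({i\<in>A. R i \<omega>} = J) * h (\<Sum>i\<in>J. X i \<omega>) \<partial>M)"
    by (simp add: Bochner_Integration.integral_sum)
  also have "\<dots> = (\<Sum>J\<in>Pow A. selection_prob A J * (\<integral>x. h x \<partial>conv_power D (card J)))"
    using assms by (intro sum.cong refl integral_indicator_selected_mult) auto
  also have "\<dots> = (\<integral>\<omega>. (\<integral>x. h x \<partial>conv_power D (card {i\<in>A. R i \<omega>})) \<partial>M)"
    using assms(1) by (rule integral_fun_selected[symmetric])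
  finally show ?thesis .
qed

lemma borel_measurable_random_sum_scaled:
  "(\<lambda>\<omega>. c *\<^sub>R (\<Sum>i\<in>A. of_bool (R i \<omega>) *\<^sub>R X i \<omega>)) \<in> borel_measurable M"
proof -
  have "(\<lambda>\<omega>. of_bool (R i \<omega>) :: real) \<in> borel_measurable M" for i
    by (rule measurable_compose[OF R_measurable]) simp
  then show ?thesis
    by (intro borel_measurable_scaleR borel_measurable_const borel_measurable_sum X_measurable)
qed

lemma real_card_selected: "finite A \<Longrightarrow> real (card {i\<in>A. R i \<omega>}) = (\<Sum>i\<in>A. of_bool (R i \<omega>))"
  by (simp add: sum.inter_filter[symmetric] Int_def conj_commute)

lemma integral_centered_R_mult:
  "(\<integral>\<omega>. (of_bool (R i \<omega>) - p i) * (of_bool (R j \<omega>) - p j) \<partial>M) = (if i = j then p i * (1 - p i) else 0)"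
proof (cases "i = j")
  case True
  define g where "g b = (of_bool b - p i) * (of_bool b - p i)" for b
  have "(\<integral>\<omega>. g (R i \<omega>) \<partial>M) = p i * g True + (1 - p i) * g False"
    by (rule integral_fun_R)
  with True show ?thesis
    by (simp add: g_def algebra_simps)
next
  case False
  define g where "g k b = of_bool b - p k" for k b
  have "(\<integral>\<omega>. (\<Prod>k\<in>{i, j}. g k (R k \<omega>)) \<partial>M) = (\<Prod>k\<in>{i, j}. \<integral>\<omega>. g k (R k \<omega>) \<partial>M)"
    by (rule integral_prod_fun_R) simp
  moreover have "(\<integral>\<omega>. g i (R i \<omega>) \<partial>M) = p i * g i True + (1 - p i) * g i False"
    by (rule integral_fun_R)
  moreover have "p i * g i True + (1 - p i) * g i False = 0"
    by (simp add: g_def algebra_simps)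
  ultimately show ?thesis
    using False by (simp add: g_def)
qed

lemma expectation_card_selected:
  assumes "finite A"
  shows "expectation (\<lambda>\<omega>. real (card {i\<in>A. R i \<omega>})) = (\<Sum>i\<in>A. p i)"
proof -
  have "expectation (\<lambda>\<omega>. real (card {i\<in>A. R i \<omega>})) = (\<Sum>i\<in>A. expectation (\<lambda>\<omega>. of_bool (R i \<omega>)))"
    unfolding real_card_selected[OF assms] using integrable_fun_R[of of_bool]
    by (simp add: Bochner_Integration.integral_sum)
  then show ?thesis
    using integral_fun_R[of of_bool] by simp
qed

lemma variance_card_selected_le:
  assumes "finite A"
  shows "variance (\<lambda>\<omega>. real (card {i\<in>A. R i \<omega>})) \<le> (\<Sum>i\<in>A. p i)"
proof -
  have "(real (card {i\<in>A. R i \<omega>}) - (\<Sum>i\<in>A. p i))\<^sup>2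
      = (\<Sum>i\<in>A. \<Sum>j\<in>A. (of_bool (R i \<omega>) - p i) * (of_bool (R j \<omega>) - p j))" for \<omega>
    unfolding real_card_selected[OF assms]
    by (simp add: power2_eq_square sum_subtractf[symmetric] sum_product)
  moreover have "integrable M (\<lambda>\<omega>. (of_bool (R i \<omega>) - p i) * (of_bool (R j \<omega>) - p j))" for i j
    using integrable_fun_R[of "\<lambda>b. of_bool b - p i"] integrable_fun_R[of "\<lambda>b. of_bool b - p j"]
    by (intro integrable_const_bound[of _ 1]) (auto simp: abs_mult p_nonneg p_le_1 intro!: mult_le_one)
  ultimately have "variance (\<lambda>\<omega>. real (card {i\<in>A. R i \<omega>})) = (\<Sum>i\<in>A. p i * (1 - p i))"
    using assms by (simp add: expectation_card_selected Bochner_Integration.integral_sum integral_centered_R_mult)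
  also have "\<dots> \<le> (\<Sum>i\<in>A. p i)"
    using p_nonneg p_le_1 by (intro sum_mono) (simp add: mult_left_le)
  finally show ?thesis .
qed

lemma prob_card_selected_deviation:
  assumes "finite A" "t > 0"
  shows "prob {\<omega>\<in>space M. t \<le> \<bar>real (card {i\<in>A. R i \<omega>}) - (\<Sum>i\<in>A. p i)\<bar>} \<le> (\<Sum>i\<in>A. p i) / t\<^sup>2"
proof -
  have [measurable]: "(\<lambda>\<omega>. card {i\<in>A. R i \<omega>}) \<in> measurable M (count_space UNIV)"
    using assms(1) R_measurable by (rule measurable_card_Collect)
  have "integrable M (\<lambda>\<omega>. (real (card {i\<in>A. R i \<omega>}))\<^sup>2)"
    using assms(1) by (intro integrable_const_bound[of _ "(real (card A))\<^sup>2"])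
      (auto intro!: power_mono card_mono)
  then have "prob {\<omega>\<in>space M. t \<le> \<bar>real (card {i\<in>A. R i \<omega>}) - (\<Sum>i\<in>A. p i)\<bar>}
      \<le> variance (\<lambda>\<omega>. real (card {i\<in>A. R i \<omega>})) / t\<^sup>2"
    using Chebyshev_inequality[of "\<lambda>\<omega>. real (card {i\<in>A. R i \<omega>})" t] assms
    by (simp add: expectation_card_selected)
  also have "\<dots> \<le> (\<Sum>i\<in>A. p i) / t\<^sup>2"
    using variance_card_selected_le[OF assms(1)] by (simp add: divide_right_mono)
  finally show ?thesis .
qed

lemma card_selected_concentrated:
  assumes A: "\<And>n. finite (A n)" and \<mu>: "filterlim \<mu> at_top sequentially"
    and mean: "\<And>\<delta>. \<delta> > 0 \<Longrightarrow> eventually (\<lambda>n. \<bar>(\<Sum>i\<in>A n. p i) - \<mu> n\<bar> \<le> \<delta> * \<mu> n) sequentially"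
    and "\<delta> > 0"
  shows "(\<lambda>n. prob {\<omega>\<in>space M. \<delta> * \<mu> n \<le> \<bar>real (card {i\<in>A n. R i \<omega>}) - \<mu> n\<bar>}) \<longlonglongrightarrow> 0"
proof -
  define C where "C = 4 * (1 + \<delta>/2) / \<delta>\<^sup>2"
  have "(\<lambda>n. C / \<mu> n) \<longlonglongrightarrow> 0"
    using \<mu> by (intro tendsto_divide_0[OF tendsto_const] filterlim_at_top_imp_at_infinity)
  have "eventually (\<lambda>n. 0 < \<mu> n) sequentially"
    using \<mu> by (simp add: filterlim_at_top_dense)
  moreover have "eventually (\<lambda>n. \<bar>(\<Sum>i\<in>A n. p i) - \<mu> n\<bar> \<le> \<delta>/2 * \<mu> n) sequentially"
    using mean[of "\<delta>/2"] \<open>\<delta> > 0\<close> by simp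
  ultimately have upper: "eventually (\<lambda>n. prob {\<omega>\<in>space M. \<delta> * \<mu> n \<le> \<bar>real (card {i\<in>A n. R i \<omega>}) - \<mu> n\<bar>} \<le> C / \<mu> n)
      sequentially"
  proof eventually_elim
    case (elim n)
    define m where "m = (\<Sum>i\<in>A n. p i)"
    have [measurable]: "(\<lambda>\<omega>. card {i\<in>A n. R i \<omega>}) \<in> measurable M (count_space UNIV)"
      using A R_measurable by (rule measurable_card_Collect)
    have m_close: "\<bar>m - \<mu> n\<bar> \<le> \<delta>/2 * \<mu> n"
      unfolding m_def by (fact elim(2))
    have "\<delta>/2 * \<mu> n \<le> \<bar>x - m\<bar>" if "\<delta> * \<mu> n \<le> \<bar>x - \<mu> n\<bar>" for x
      using that m_close by linarith
    moreover have "{\<omega>\<in>space M. \<delta>/2 * \<mu> n \<le> \<bar>real (card {i\<in>A n. R i \<omega>}) - m\<bar>} \<in> sets M"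
      by measurable
    ultimately have "prob {\<omega>\<in>space M. \<delta> * \<mu> n \<le> \<bar>real (card {i\<in>A n. R i \<omega>}) - \<mu> n\<bar>}
        \<le> prob {\<omega>\<in>space M. \<delta>/2 * \<mu> n \<le> \<bar>real (card {i\<in>A n. R i \<omega>}) - m\<bar>}"
      by (intro finite_measure_mono) auto
    also have "\<dots> \<le> m / (\<delta>/2 * \<mu> n)\<^sup>2"
      unfolding m_def using A elim(1) \<open>\<delta> > 0\<close> by (intro prob_card_selected_deviation) auto
    also have "\<dots> \<le> (1 + \<delta>/2) * \<mu> n / (\<delta>/2 * \<mu> n)\<^sup>2"
    proof (rule divide_right_mono)
      have "m \<le> \<mu> n + \<delta>/2 * \<mu> n"
        using m_close by linarith
      then show "m \<le> (1 + \<delta>/2) * \<mu> n"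
        by (simp add: algebra_simps)
    qed simp
    also have "\<dots> = C / \<mu> n"
      unfolding C_def using elim(1) \<open>\<delta> > 0\<close> by (simp add: field_simps power2_eq_square)
    finally show ?case .
  qed
  have lower: "eventually (\<lambda>n. 0 \<le> prob {\<omega>\<in>space M. \<delta> * \<mu> n \<le> \<bar>real (card {i\<in>A n. R i \<omega>}) - \<mu> n\<bar>})
      sequentially"
    by simp
  show ?thesis
    by (rule tendsto_sandwich[OF lower upper tendsto_const \<open>(\<lambda>n. C / \<mu> n) \<longlonglongrightarrow> 0\<close>])
qed

theorem conv_in_distr_random_sum:
  assumes L: "prob_space L" "sets L = sets borel"
    and normalized: "conv_in_distr (\<lambda>k. distr (conv_power D k) borel (\<lambda>x. real k powr (-\<alpha>) *\<^sub>R x)) L"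
    and A: "\<And>n. finite (A n)" and \<mu>: "filterlim \<mu> at_top sequentially"
    and mean: "\<And>\<delta>. \<delta> > 0 \<Longrightarrow> eventually (\<lambda>n. \<bar>(\<Sum>i\<in>A n. p i) - \<mu> n\<bar> \<le> \<delta> * \<mu> n) sequentially"
  shows "conv_in_distr
           (\<lambda>n. distr M borel (\<lambda>\<omega>. (1 / \<mu> n powr \<alpha>) *\<^sub>R (\<Sum>i\<in>A n. of_bool (R i \<omega>) *\<^sub>R X i \<omega>))) L"
  unfolding conv_in_distr_def
proof (intro allI impI)
  fix f :: "'a \<Rightarrow> real"
  assume "continuous_on UNIV f \<and> bounded (range f)"
  then have f: "continuous_on UNIV f" "bounded (range f)"
    by auto
  then obtain B where B: "\<And>x. \<bar>f x\<bar> \<le> B"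
    unfolding bounded_pos by auto
  have f_scaled: "continuous_on UNIV (\<lambda>x. f (c *\<^sub>R x))" for c
    by (intro continuous_on_compose2[OF f(1)] continuous_intros) auto
  have f_scaled_bound: "\<bar>f (c *\<^sub>R x)\<bar> \<le> B" for c x
    by (rule B)
  define \<Phi> where "\<Phi> n k = (\<integral>x. f ((1 / \<mu> n powr \<alpha>) *\<^sub>R x) \<partial>conv_power D k)" for n k
  have integral_eq: "(\<integral>y. f y \<partial>distr M borel
      (\<lambda>\<omega>. (1 / \<mu> n powr \<alpha>) *\<^sub>R (\<Sum>i\<in>A n. of_bool (R i \<omega>) *\<^sub>R X i \<omega>)))
      = (\<integral>\<omega>. \<Phi> n (card {i\<in>A n. R i \<omega>}) \<partial>M)" for n
  proof -
    have "(\<integral>y. f y \<partial>distr M borel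
        (\<lambda>\<omega>. (1 / \<mu> n powr \<alpha>) *\<^sub>R (\<Sum>i\<in>A n. of_bool (R i \<omega>) *\<^sub>R X i \<omega>)))
        = (\<integral>\<omega>. f ((1 / \<mu> n powr \<alpha>) *\<^sub>R (\<Sum>i\<in>A n. of_bool (R i \<omega>) *\<^sub>R X i \<omega>)) \<partial>M)"
      by (rule integral_distr[OF borel_measurable_random_sum_scaled borel_measurable_continuous_onI[OF f(1)]])
    also have "\<dots> = (\<integral>\<omega>. \<Phi> n (card {i\<in>A n. R i \<omega>}) \<partial>M)"
      unfolding \<Phi>_def
      using integral_fun_random_sum[OF A borel_measurable_continuous_onI[OF f_scaled[of "1 / \<mu> n powr \<alpha>"]]
          f_scaled_bound[of "1 / \<mu> n powr \<alpha>"]] .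
    finally show ?thesis .
  qed
  have "(\<lambda>n. \<integral>\<omega>. \<Phi> n (card {i\<in>A n. R i \<omega>}) \<partial>M) \<longlonglongrightarrow> (\<integral>y. f y \<partial>L)"
  proof (rule integral_random_index_tendsto)
    show "(\<lambda>\<omega>. card {i\<in>A n. R i \<omega>}) \<in> measurable M (count_space UNIV)" for n
      using A R_measurable by (rule measurable_card_Collect)
    show "\<bar>\<Phi> n k\<bar> \<le> B" for n k
      unfolding \<Phi>_def
      using prob_space_conv_power[OF prob_space_D sets_D] sets_conv_power f_scaled f_scaled_bound
      by (rule abs_integral_le_bound)
    show "\<bar>\<integral>y. f y \<partial>L\<bar> \<le> B"
      using L f(1) B by (rule abs_integral_le_bound)
    show "\<exists>\<delta>>0. eventually (\<lambda>n. \<forall>k. \<bar>real k - \<mu> n\<bar> < \<delta> * \<mu> n \<longrightarrow> \<bar>\<Phi> n k - (\<integral>y. f y \<partial>L)\<bar> < \<epsilon>)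
        sequentially" if "\<epsilon> > 0" for \<epsilon>
      unfolding \<Phi>_def using prob_space_D sets_D L normalized f \<mu> that by (rule conv_power_rescaled_close)
    show "(\<lambda>n. prob {\<omega>\<in>space M. \<delta> * \<mu> n \<le> \<bar>real (card {i\<in>A n. R i \<omega>}) - \<mu> n\<bar>}) \<longlonglongrightarrow> 0"
      if "\<delta> > 0" for \<delta>
      using A \<mu> mean that by (rule card_selected_concentrated)
  qed
  then show "(\<lambda>n. \<integral>y. f y \<partial>distr M borel
      (\<lambda>\<omega>. (1 / \<mu> n powr \<alpha>) *\<^sub>R (\<Sum>i\<in>A n. of_bool (R i \<omega>) *\<^sub>R X i \<omega>))) \<longlonglongrightarrow> (\<integral>y. f y \<partial>L)"
    unfolding integral_eq .
qed

end

theorem lemma8: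
  fixes M :: "'b measure" and D L :: "'a::euclidean_space measure" and \<alpha> :: real
    and \<Delta>s Dt :: "nat \<Rightarrow> 'b \<Rightarrow> 'a" and R :: "nat \<Rightarrow> 'b \<Rightarrow> bool"
  assumes "prob_space M"
    and "\<alpha> > 0"
    and "prob_space L" and "sets L = sets borel"
    and "\<And>i. \<Delta>s i \<in> borel_measurable M" and "\<And>i. distr M borel (\<Delta>s i) = D"
    and "prob_space.indep_vars M (\<lambda>_. borel) \<Delta>s UNIV"
    and "conv_in_distr
           (\<lambda>n. distr M borel (\<lambda>\<omega>. (real n powr (-\<alpha>)) *\<^sub>R (\<Sum>i\<in>{1..n}. \<Delta>s i \<omega>))) L"
    and "\<And>n. Dt n \<in> borel_measurable M" and "\<And>n. distr M borel (Dt n) = D"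
    and "\<And>n. R n \<in> measurable M (count_space UNIV)"
    and "\<And>n. distr M (count_space UNIV) (R n)
               = measure_pmf (bernoulli_pmf ((real (T (Suc n)) - real (T n)) / real (T (Suc n))))"
    and "prob_space.indep_sets M
           (\<lambda>k. case k of
                   Inl n \<Rightarrow> {R n -` A \<inter> space M | A. A \<in> sets (count_space (UNIV :: bool set))}
                 | Inr n \<Rightarrow> {Dt n -` A \<inter> space M | A. A \<in> sets (borel :: 'a measure)})
           UNIV"
  shows "conv_in_distr
           (\<lambda>n. distr M borel
              (\<lambda>\<omega>. (1 / (ln (real (T n)) powr \<alpha>)) *\<^sub>R
                    (\<Sum>i\<in>{1..<n}. of_bool (R i \<omega>) *\<^sub>R Dt i \<omega>))) L"
proof -
  have "0 \<le> (real (T (Suc n)) - real (T n)) / real (T (Suc n))"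
    "(real (T (Suc n)) - real (T n)) / real (T (Suc n)) \<le> 1" for n
    using T_ge_1[of n] T_le_T_Suc[of n] by simp_all
  with assms(1,9-13) interpret random_selection M D "\<lambda>n. (real (T (Suc n)) - real (T n)) / real (T (Suc n))" Dt R
    unfolding random_selection_def random_selection_axioms_def by blast
  have normalized: "conv_in_distr (\<lambda>k. distr (conv_power D k) borel (\<lambda>x. real k powr (-\<alpha>) *\<^sub>R x)) L"
    using assms(8) distr_scaled_sum_iid[OF assms(7,6)] by simp
  show ?thesis
  proof (rule conv_in_distr_random_sum[OF assms(3,4) normalized])
    show "eventually (\<lambda>n. \<bar>(\<Sum>i\<in>{1..<n}. (real (T (Suc i)) - real (T i)) / real (T (Suc i)))
        - ln (real (T n))\<bar> \<le> \<delta> * ln (real (T n))) sequentially" if "\<delta> > 0" for \<delta>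
      using T_ge_1 T_le_T_Suc T_Suc_ratio_tendsto_1 ln_T_tendsto_at_top that
      by (rule sum_relative_increments_close_ln)
  qed (simp_all add: ln_T_tendsto_at_top)
qed

end
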